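(* Let $k\geq 3$ and let $G$ be the cubic graph on $n=6k$ vertices $a_j,b_j,c_j,d_j,e_j,f_j$ ($j=1,\dots,k$) with edges $a_jb_j,\ a_jc_j,\ b_jd_j,\ b_je_j,\ c_jd_j,\ c_je_j,\ d_jf_j,\ e_jf_j$ for each $j$, and $f_ja_{j+1}$ for each $j$ (indices modulo $k$, so $f_k a_1$ is an edge). Then $Z(G)=M(G)=n/3+2$.
   Context: For a graph $G$ on vertices $w_1,\dots,w_n$, $S(G)$ is the set of real symmetric $n\times n$ matrices $A$ such that for $s\neq t$, $a_{st}\neq 0$ if and only if $w_s$ and $w_t$ are adjacent (diagonal entries arbitrary); the maximum nullity $M(G)$ is the maximum nullity of a matrix in $S(G)$. Zero forcing: color each vertex black or white; if a black vertex has exactly one white neighbor, that neighbor is recolored black. A set $Z$ is a zero forcing set if starting with exactly $Z$ black and applying this rule repeatedly makes all vertices black; $Z(G)$ is the minimum size of a zero forcing set. *)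

theory Defs
  imports "Jordan_Normal_Form.Matrix_Kernel"
begin

text \<open>Graphs are given on the vertex set {0..<n} by a (symmetric, irreflexive)
adjacency relation adj :: nat => nat => bool.\<close>

definition S_graph :: "nat \<Rightarrow> (nat \<Rightarrow> nat \<Rightarrow> bool) \<Rightarrow> real mat set" where
  "S_graph n adj = {A. A \<in> carrier_mat n n \<and> A\<^sup>T = A \<and>
      (\<forall>s<n. \<forall>t<n. s \<noteq> t \<longrightarrow> (A $$ (s, t) \<noteq> 0 \<longleftrightarrow> adj s t))}"

definition max_nullity :: "nat \<Rightarrow> (nat \<Rightarrow> nat \<Rightarrow> bool) \<Rightarrow> nat" where
  "max_nullity n adj = Max (kernel_dim ` S_graph n adj)"

inductive_set zf_closure :: "nat \<Rightarrow> (nat \<Rightarrow> nat \<Rightarrow> bool) \<Rightarrow> nat set \<Rightarrow> nat set"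
  for n adj Z where
  init: "z \<in> Z \<Longrightarrow> z < n \<Longrightarrow> z \<in> zf_closure n adj Z"
| force: "u \<in> zf_closure n adj Z \<Longrightarrow> w < n \<Longrightarrow> adj u w \<Longrightarrow>
          (\<forall>v<n. adj u v \<and> v \<noteq> w \<longrightarrow> v \<in> zf_closure n adj Z) \<Longrightarrow>
          w \<in> zf_closure n adj Z"

definition zero_forcing_set :: "nat \<Rightarrow> (nat \<Rightarrow> nat \<Rightarrow> bool) \<Rightarrow> nat set \<Rightarrow> bool" where
  "zero_forcing_set n adj Z \<longleftrightarrow> Z \<subseteq> {..<n} \<and> zf_closure n adj Z = {..<n}"

definition zero_forcing_number :: "nat \<Rightarrow> (nat \<Rightarrow> nat \<Rightarrow> bool) \<Rightarrow> nat" where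
  "zero_forcing_number n adj = Min (card ` {Z. zero_forcing_set n adj Z})"

text \<open>The cubic graph of the theorem. Vertex 6*j + t (j < k, t < 6) stands for
a_{j+1}, b_{j+1}, c_{j+1}, d_{j+1}, e_{j+1}, f_{j+1} for t = 0,1,2,3,4,5.\<close>
definition gadget_edge :: "nat \<Rightarrow> nat \<Rightarrow> bool" where
  "gadget_edge s t \<longleftrightarrow> (s, t) \<in> {(0,1), (0,2), (1,3), (1,4), (2,3), (2,4), (3,5), (4,5)}"

definition G_adj_dir :: "nat \<Rightarrow> nat \<Rightarrow> nat \<Rightarrow> bool" where
  "G_adj_dir k u v \<longleftrightarrow>
     u < 6 * k \<and> v < 6 * k \<and>
     ((u div 6 = v div 6 \<and> gadget_edge (u mod 6) (v mod 6)) \<or>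
      (u mod 6 = 5 \<and> v mod 6 = 0 \<and> v div 6 = (u div 6 + 1) mod k))"

definition G_adj :: "nat \<Rightarrow> nat \<Rightarrow> nat \<Rightarrow> bool" where
  "G_adj k u v \<longleftrightarrow> G_adj_dir k u v \<or> G_adj_dir k v u"

end

theory Submission
  imports Defs "Jordan_Normal_Form.DL_Rank"
begin

text \<open>For every A in S(G) and every zero forcing set Z, a null vector of A vanishing on Z
vanishes on everything Z forces (the forcing vertex's row of A x = 0 leaves a single
nonzero coefficient), so M(G) \<le> Z(G). For the graph G, the 2k+2 vertices a_1, f_1,
b_j, d_j form a zero forcing set, while the adjacency matrix of G has 2k+2 null vectors
restricting to the unit vectors on this set: b_j - c_j and d_j - e_j (twins have equal
neighbourhoods), and the sums over all j of a_j - e_j and of f_j - c_j.\<close>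

section \<open>Kernel dimension via coordinate projections\<close>

lemma (in kernel) Ker_fin_dim: "Ker.fin_dim"
  using kernel_basis_exists[OF A] unfolding Ker.fin_dim_def Ker.basis_def by blast

definition coord_proj :: "nat list \<Rightarrow> 'a vec \<Rightarrow> 'a vec" where
  "coord_proj ps x = vec (length ps) (\<lambda>i. x $ (ps ! i))"

lemma (in kernel) coord_proj_linear:
  assumes ps: "set ps \<subseteq> {..<nc}"
  shows "linear_map class_ring VK (module_vec TYPE('a) (length ps)) (coord_proj ps)"
proof -
  interpret W: vec_space "TYPE('a)" "length ps" .
  have ps': "\<And>i. i < length ps \<Longrightarrow> ps ! i < nc" using ps nth_mem by blast
  show ?thesis
    apply (intro linear_map.intro mod_hom.intro mod_hom_axioms.intro)
        apply (rule Ker.vectorspace_axioms W.vectorspace_axioms Ker.module_axioms W.module_axioms)+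
    unfolding LinearCombinations.module_hom_def using ps' mat_kernel[OF A]
    by (auto simp: class_ring_simps module_vec_simps coord_proj_def)
qed

lemma (in kernel) coord_proj_inj_on_kernel:
  assumes ps: "set ps \<subseteq> {..<nc}"
    and vanish: "\<And>x. x \<in> mat_kernel A \<Longrightarrow> (\<forall>i\<in>set ps. x $ i = 0) \<Longrightarrow> x = 0\<^sub>v nc"
  shows "inj_on (coord_proj ps) (mat_kernel A)"
proof -
  interpret W: vec_space "TYPE('a)" "length ps" .
  interpret L: linear_map class_ring VK W.V "coord_proj ps" by (rule coord_proj_linear[OF ps])
  have "carrier (Ker.vs L.kerT) = {\<zero>\<^bsub>VK\<^esub>}"
  proof (intro equalityI subsetI)
    fix x assume "x \<in> carrier (Ker.vs L.kerT)"
    then have x: "x \<in> mat_kernel A" and proj_zero: "coord_proj ps x = 0\<^sub>v (length ps)"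
      by (auto simp: mod_hom.ker_def[OF L.mod_hom_axioms] module_vec_simps)
    have "\<forall>i\<in>set ps. x $ i = 0"
    proof
      fix i assume "i \<in> set ps"
      then obtain j where "j < length ps" "i = ps ! j" by (auto simp: in_set_conv_nth)
      then show "x $ i = 0" using arg_cong[OF proj_zero, of "\<lambda>v. v $ j"] by (simp add: coord_proj_def)
    qed
    then show "x \<in> {\<zero>\<^bsub>VK\<^esub>}" using vanish[OF x] by (simp add: module_vec_simps)
  next
    fix x assume "x \<in> {\<zero>\<^bsub>VK\<^esub>}"
    moreover have "coord_proj ps (0\<^sub>v nc) = 0\<^sub>v (length ps)"
      unfolding coord_proj_def using ps nth_mem by (intro eq_vecI) (auto simp: subset_iff)
    ultimately show "x \<in> carrier (Ker.vs L.kerT)"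
      using Ker.zero_closed by (auto simp: mod_hom.ker_def[OF L.mod_hom_axioms] module_vec_simps)
  qed
  then show ?thesis using L.Ke0_imp_inj by simp
qed

lemma (in kernel) dim_le_length_vanishing_coords:
  assumes ps: "set ps \<subseteq> {..<nc}"
    and vanish: "\<And>x. x \<in> mat_kernel A \<Longrightarrow> (\<forall>i\<in>set ps. x $ i = 0) \<Longrightarrow> x = 0\<^sub>v nc"
  shows "dim \<le> length ps"
proof -
  interpret W: vec_space "TYPE('a)" "length ps" .
  interpret L: linear_map class_ring VK W.V "coord_proj ps" by (rule coord_proj_linear[OF ps])
  interpret im: vectorspace class_ring "W.vs L.imT" using L.imT_is_subspace W.subspace_is_vs by blast
  interpret L_onto: linear_map class_ring VK "W.vs L.imT" "coord_proj ps"
    apply (intro linear_map.intro mod_hom.intro mod_hom_axioms.intro)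
        apply (rule Ker.vectorspace_axioms im.vectorspace_axioms Ker.module_axioms im.module_axioms)+
    using L.T_hom unfolding LinearCombinations.module_hom_def mod_hom.im_def[OF L.mod_hom_axioms]
    by auto
  have inj: "inj_on (coord_proj ps) (carrier VK)"
    using coord_proj_inj_on_kernel[OF ps vanish] by simp
  have onto: "coord_proj ps ` carrier VK = carrier (W.vs L.imT)"
    unfolding mod_hom.im_def[OF L.mod_hom_axioms] by simp
  have "dim = im.dim" by (rule L_onto.dim_eq[OF Ker_fin_dim inj onto])
  also have "\<dots> \<le> W.dim"
    by (rule W.subspace_dim[OF L.imT_is_subspace W.fin_dim L_onto.surj_fin_dim[OF Ker_fin_dim onto]])
  finally show ?thesis by (simp add: W.dim_is_n)
qed

lemma (in kernel) length_le_dim_coord_indicators: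
  assumes ps: "set ps \<subseteq> {..<nc}"
    and wit: "\<And>i. i < length ps \<Longrightarrow>
      \<exists>w\<in>mat_kernel A. \<forall>i'<length ps. w $ (ps ! i') = (if i' = i then 1 else 0)"
  shows "length ps \<le> dim"
proof -
  interpret W: vec_space "TYPE('a)" "length ps" .
  interpret L: linear_map class_ring VK W.V "coord_proj ps" by (rule coord_proj_linear[OF ps])
  have im: "L.imT = carrier_vec (length ps)"
  proof
    show "L.imT \<subseteq> carrier_vec (length ps)"
      unfolding mod_hom.im_def[OF L.mod_hom_axioms] by (auto simp: coord_proj_def)
    have "set (unit_vecs (length ps)) \<subseteq> L.imT"
    proof
      fix u :: "'a vec" assume "u \<in> set (unit_vecs (length ps))"
      then obtain i where i: "i < length ps" "u = unit_vec (length ps) i" by (auto simp: unit_vecs_def)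
      obtain w where w: "w \<in> mat_kernel A" "\<forall>i'<length ps. w $ (ps ! i') = (if i' = i then 1 else 0)"
        using wit[OF i(1)] by blast
      have "coord_proj ps w = u"
        unfolding i(2) coord_proj_def using w(2) i(1) by (intro eq_vecI) (simp_all add: unit_vec_def)
      then show "u \<in> L.imT" using w(1) unfolding mod_hom.im_def[OF L.mod_hom_axioms] by force
    qed
    then have "W.span (set (unit_vecs (length ps))) \<subseteq> L.imT"
      by (rule W.span_is_subset[OF _ subspace.submod[OF L.imT_is_subspace]])
    then show "carrier_vec (length ps) \<subseteq> L.imT" using W.span_unit_vecs_is_carrier by simp
  qed
  have "W.vs L.imT = W.V" unfolding im by (simp add: module_vec_def)
  then have "vectorspace.dim class_ring (W.vs L.imT) = length ps" by (simp add: W.dim_is_n)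
  with L.rank_nullity[OF Ker_fin_dim] show ?thesis by linarith
qed

lemma (in kernel) card_le_dim_coord_indicators:
  assumes P: "finite P" "P \<subseteq> {..<nc}"
    and wit: "\<And>p. p \<in> P \<Longrightarrow> \<exists>w\<in>mat_kernel A. \<forall>p'\<in>P. w $ p' = (if p' = p then 1 else 0)"
  shows "card P \<le> dim"
proof -
  define ps where "ps = sorted_list_of_set P"
  have sps: "set ps = P" "distinct ps" "length ps = card P" using P unfolding ps_def by auto
  have "length ps \<le> dim"
  proof (rule length_le_dim_coord_indicators)
    show "set ps \<subseteq> {..<nc}" using sps P by simp
    fix i assume i: "i < length ps"
    then have "ps ! i \<in> P" using sps nth_mem by blast
    then obtain w where w: "w \<in> mat_kernel A" "\<forall>p'\<in>P. w $ p' = (if p' = ps ! i then 1 else 0)"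
      using wit by blast
    show "\<exists>w\<in>mat_kernel A. \<forall>i'<length ps. w $ (ps ! i') = (if i' = i then 1 else 0)"
    proof (intro bexI[OF _ w(1)] allI impI)
      fix i' assume i': "i' < length ps"
      then have "ps ! i' \<in> P" using sps nth_mem by blast
      then show "w $ (ps ! i') = (if i' = i then 1 else 0)"
        using w(2) nth_eq_iff_index_eq[OF sps(2) i' i] by simp
    qed
  qed
  then show ?thesis using sps by simp
qed

lemma (in kernel) dim_le_card_vanishing_coords:
  assumes P: "finite P" "P \<subseteq> {..<nc}"
    and vanish: "\<And>x. x \<in> mat_kernel A \<Longrightarrow> (\<forall>i\<in>P. x $ i = 0) \<Longrightarrow> x = 0\<^sub>v nc"
  shows "dim \<le> card P"
proof -
  define ps where "ps = sorted_list_of_set P"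
  have sps: "set ps = P" "distinct ps" "length ps = card P" using P unfolding ps_def by auto
  have "dim \<le> length ps" by (rule dim_le_length_vanishing_coords) (use sps P vanish in auto)
  then show ?thesis using sps by simp
qed

section \<open>Zero forcing sets bound the nullity\<close>

definition nbrs :: "nat \<Rightarrow> (nat \<Rightarrow> nat \<Rightarrow> bool) \<Rightarrow> nat \<Rightarrow> nat set" where
  "nbrs n adj u = {v. v < n \<and> adj u v}"

lemma zf_closure_less: "v \<in> zf_closure n adj Z \<Longrightarrow> v < n"
  by (induction rule: zf_closure.induct) auto

lemma zf_closure_force_nbrs:
  assumes "u \<in> zf_closure n adj Z" and "w \<in> nbrs n adj u"
    and "nbrs n adj u - {w} \<subseteq> zf_closure n adj Z"
  shows "w \<in> zf_closure n adj Z"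
  by (rule zf_closure.force[OF assms(1)]) (use assms(2,3) in \<open>auto simp: nbrs_def\<close>)

lemma mat_kernel_vanishes_on_zf_closure:
  assumes A: "A \<in> S_graph n adj" and x: "x \<in> mat_kernel A" and Z: "\<forall>z\<in>Z. x $ z = 0"
  shows "v \<in> zf_closure n adj Z \<Longrightarrow> x $ v = 0"
proof (induction rule: zf_closure.induct)
  case (init z)
  then show ?case using Z by simp
next
  case (force u w)
  have Ac: "A \<in> carrier_mat n n"
    and off_diag: "\<And>s t. s < n \<Longrightarrow> t < n \<Longrightarrow> s \<noteq> t \<Longrightarrow> A $$ (s, t) \<noteq> 0 \<longleftrightarrow> adj s t"
    using A unfolding S_graph_def by auto
  have xc: "x \<in> carrier_vec n" and Ax: "A *\<^sub>v x = 0\<^sub>v n" using mat_kernelD[OF Ac x] by auto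
  have u: "u < n" using force.hyps(1) zf_closure_less by blast
  show ?case
  proof (cases "w = u")
    case False
    have other_terms: "A $$ (u, l) * x $ l = 0" if "l < n" "l \<noteq> w" for l
      using force.IH that off_diag[of u l] u by (cases "l = u \<or> adj u l") auto
    have "0 = (A *\<^sub>v x) $ u" using Ax u by simp
    also have "\<dots> = (\<Sum>l\<in>{0..<n}. A $$ (u, l) * x $ l)"
      using Ac xc u by (simp add: mult_mat_vec_def scalar_prod_def)
    also have "\<dots> = (\<Sum>l\<in>{w}. A $$ (u, l) * x $ l)"
      using force.hyps(2) other_terms by (intro sum.mono_neutral_right) auto
    finally have "A $$ (u, w) * x $ w = 0" by simp
    moreover have "A $$ (u, w) \<noteq> 0" using off_diag[of u w] u force.hyps False by simp
    ultimately show ?thesis by simp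
  qed (use force.IH in simp)
qed

lemma kernel_dim_le_card_zero_forcing_set:
  assumes AS: "A \<in> S_graph n adj" and Z: "zero_forcing_set n adj Z"
  shows "kernel_dim A \<le> card Z"
proof -
  have Ac: "A \<in> carrier_mat n n" using AS unfolding S_graph_def by auto
  interpret kernel n n A by unfold_locales (rule Ac)
  have Zn: "Z \<subseteq> {..<n}" and closure: "zf_closure n adj Z = {..<n}"
    using Z unfolding zero_forcing_set_def by auto
  have "dim \<le> card Z"
  proof (rule dim_le_card_vanishing_coords[OF finite_subset[OF Zn] Zn])
    fix x assume x: "x \<in> mat_kernel A" and "\<forall>i\<in>Z. x $ i = 0"
    then have "x $ i = 0" if "i < n" for i
      using mat_kernel_vanishes_on_zf_closure[OF AS] closure that by blast
    then show "x = 0\<^sub>v n" using mat_kernelD[OF Ac x] by (intro eq_vecI) auto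
  qed simp
  then show ?thesis by simp
qed

lemma zero_forcing_number_eq_max_nullity:
  assumes Z: "zero_forcing_set n adj Z" and AS: "A \<in> S_graph n adj"
    and le: "card Z \<le> kernel_dim A"
  shows "zero_forcing_number n adj = card Z \<and> max_nullity n adj = card Z"
proof
  have card_ge: "card Z \<le> card Z'" if "zero_forcing_set n adj Z'" for Z'
    using le kernel_dim_le_card_zero_forcing_set[OF AS that] by simp
  have card_le: "card Z' \<le> n" if "zero_forcing_set n adj Z'" for Z'
    using card_mono[of "{..<n}" Z'] that unfolding zero_forcing_set_def by simp
  have "finite (card ` {Z. zero_forcing_set n adj Z})"
    by (rule finite_subset[of _ "{..n}"]) (use card_le in auto)
  then show "zero_forcing_number n adj = card Z"
    unfolding zero_forcing_number_def by (rule Min_eqI) (use card_ge Z in auto)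
  have dim_le: "kernel_dim B \<le> card Z" if "B \<in> S_graph n adj" for B
    by (rule kernel_dim_le_card_zero_forcing_set[OF that Z])
  have "finite (kernel_dim ` S_graph n adj)"
    by (rule finite_subset[of _ "{..card Z}"]) (use dim_le in auto)
  moreover have "card Z = kernel_dim A" using le dim_le[OF AS] by simp
  ultimately show "max_nullity n adj = card Z"
    unfolding max_nullity_def using dim_le AS by (intro Max_eqI) auto
qed

section \<open>The graph G\<close>

definition cyc_succ :: "nat \<Rightarrow> nat \<Rightarrow> nat" where
  "cyc_succ k j = (if Suc j = k then 0 else Suc j)"

definition cyc_pred :: "nat \<Rightarrow> nat \<Rightarrow> nat" where
  "cyc_pred k j = (if j = 0 then k - 1 else j - 1)"

lemma Suc_mod_eq_cyc_succ: "j < k \<Longrightarrow> (j + 1) mod k = cyc_succ k j"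
  unfolding cyc_succ_def by (auto simp: mod_if)

lemma cyc_succ_eq_iff: "j < k \<Longrightarrow> q < k \<Longrightarrow> j = cyc_succ k q \<longleftrightarrow> q = cyc_pred k j"
  unfolding cyc_succ_def cyc_pred_def by auto

lemma cyc_succ_less: "j < k \<Longrightarrow> cyc_succ k j < k"
  unfolding cyc_succ_def by auto

lemma cyc_pred_less: "j < k \<Longrightarrow> cyc_pred k j < k"
  unfolding cyc_pred_def by auto

lemma block_div_mod [simp]:
  fixes q r :: nat
  shows "r < 6 \<Longrightarrow> (6 * q + r) div 6 = q" "r < 6 \<Longrightarrow> (6 * q + r) mod 6 = r"
    "(6 * q) div 6 = q" "(6 * q) mod 6 = 0"
  by auto

lemma block_eq_iff:
  fixes q p r s :: nat
  assumes "r < 6" "s < 6"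
  shows "6 * q + r = 6 * p + s \<longleftrightarrow> q = p \<and> r = s"
  using assms by (metis block_div_mod(1,2))

lemma block_eq_iff0: "(r::nat) < 6 \<Longrightarrow> 6 * q + r = 6 * p \<longleftrightarrow> q = p \<and> r = 0"
  using block_eq_iff[of r 0 q p] by simp

lemma less_6_cases: "(r::nat) < 6 \<Longrightarrow> r = 0 \<or> r = 1 \<or> r = 2 \<or> r = 3 \<or> r = 4 \<or> r = 5"
  by auto

lemma G_adj_blocks:
  assumes "t < 6" "r < 6"
  shows "G_adj k (6 * j + t) (6 * q + r) \<longleftrightarrow> j < k \<and> q < k \<and>
     (j = q \<and> (gadget_edge t r \<or> gadget_edge r t) \<or>
      t = 5 \<and> r = 0 \<and> q = cyc_succ k j \<or> t = 0 \<and> r = 5 \<and> j = cyc_succ k q)"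
proof -
  have "6 * j + t < 6 * k \<longleftrightarrow> j < k" "6 * q + r < 6 * k \<longleftrightarrow> q < k" using assms by auto
  then show ?thesis using assms Suc_mod_eq_cyc_succ[of j k] Suc_mod_eq_cyc_succ[of q k]
    unfolding G_adj_def G_adj_dir_def by auto
qed

lemma G_nbrsI:
  assumes nbr: "\<And>q r. r < 6 \<Longrightarrow> q < k \<and> G_adj k v (6 * q + r) \<longleftrightarrow> (q, r) \<in> B"
    and B: "B \<subseteq> UNIV \<times> {..<6}"
  shows "nbrs (6 * k) (G_adj k) v = (\<lambda>(q, r). 6 * q + r) ` B"
proof (rule Set.set_eqI)
  fix l :: nat
  define q r where "q = l div 6" and "r = l mod 6"
  have l: "l = 6 * q + r" "r < 6" unfolding q_def r_def by simp_all
  have "l \<in> nbrs (6 * k) (G_adj k) v \<longleftrightarrow> q < k \<and> G_adj k v (6 * q + r)"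
    unfolding nbrs_def using l by auto
  also have "\<dots> \<longleftrightarrow> (q, r) \<in> B" by (rule nbr[OF l(2)])
  also have "\<dots> \<longleftrightarrow> l \<in> (\<lambda>(q, r). 6 * q + r) ` B"
  proof
    assume "(q, r) \<in> B"
    then show "l \<in> (\<lambda>(q, r). 6 * q + r) ` B" using l(1) by force
  next
    assume "l \<in> (\<lambda>(q, r). 6 * q + r) ` B"
    then obtain q' r' where "(q', r') \<in> B" "l = 6 * q' + r'" by auto
    with B l show "(q, r) \<in> B" by (auto simp: block_eq_iff)
  qed
  finally show "l \<in> nbrs (6 * k) (G_adj k) v \<longleftrightarrow> l \<in> (\<lambda>(q, r). 6 * q + r) ` B" .
qed

lemma G_nbrs_a:
  assumes "j < k"
  shows "nbrs (6 * k) (G_adj k) (6 * j) = {6 * j + 1, 6 * j + 2, 6 * cyc_pred k j + 5}"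
proof -
  have "nbrs (6 * k) (G_adj k) (6 * j) = (\<lambda>(q, r). 6 * q + r) ` {(j, 1), (j, 2), (cyc_pred k j, 5)}"
  proof (rule G_nbrsI)
    fix q r :: nat assume r: "r < 6"
    have gadget: "gadget_edge 0 r \<or> gadget_edge r 0 \<longleftrightarrow> r = 1 \<or> r = 2" by (auto simp: gadget_edge_def)
    show "q < k \<and> G_adj k (6 * j) (6 * q + r) \<longleftrightarrow> (q, r) \<in> {(j, 1), (j, 2), (cyc_pred k j, 5)}"
      using gadget G_adj_blocks[of 0 r k j q] r assms cyc_pred_less[OF assms]
        cyc_succ_eq_iff[OF assms, of q] by auto
  qed simp
  then show ?thesis by simp
qed

lemma G_nbrs_bc:
  assumes "j < k" "t = 1 \<or> t = 2"
  shows "nbrs (6 * k) (G_adj k) (6 * j + t) = {6 * j, 6 * j + 3, 6 * j + 4}"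
proof -
  have "nbrs (6 * k) (G_adj k) (6 * j + t) = (\<lambda>(q, r). 6 * q + r) ` {(j, 0), (j, 3), (j, 4)}"
  proof (rule G_nbrsI)
    fix q r :: nat assume r: "r < 6"
    have gadget: "gadget_edge t r \<or> gadget_edge r t \<longleftrightarrow> r = 0 \<or> r = 3 \<or> r = 4"
      using assms(2) by (auto simp: gadget_edge_def)
    show "q < k \<and> G_adj k (6 * j + t) (6 * q + r) \<longleftrightarrow> (q, r) \<in> {(j, 0), (j, 3), (j, 4)}"
      using gadget G_adj_blocks[of t r k j q] r assms by auto
  qed simp
  then show ?thesis by simp
qed

lemma G_nbrs_de:
  assumes "j < k" "t = 3 \<or> t = 4"
  shows "nbrs (6 * k) (G_adj k) (6 * j + t) = {6 * j + 1, 6 * j + 2, 6 * j + 5}"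
proof -
  have "nbrs (6 * k) (G_adj k) (6 * j + t) = (\<lambda>(q, r). 6 * q + r) ` {(j, 1), (j, 2), (j, 5)}"
  proof (rule G_nbrsI)
    fix q r :: nat assume r: "r < 6"
    have gadget: "gadget_edge t r \<or> gadget_edge r t \<longleftrightarrow> r = 1 \<or> r = 2 \<or> r = 5"
      using assms(2) by (auto simp: gadget_edge_def)
    show "q < k \<and> G_adj k (6 * j + t) (6 * q + r) \<longleftrightarrow> (q, r) \<in> {(j, 1), (j, 2), (j, 5)}"
      using gadget G_adj_blocks[of t r k j q] r assms by auto
  qed simp
  then show ?thesis by simp
qed

lemma G_nbrs_f:
  assumes "j < k"
  shows "nbrs (6 * k) (G_adj k) (6 * j + 5) = {6 * j + 3, 6 * j + 4, 6 * cyc_succ k j}"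
proof -
  have "nbrs (6 * k) (G_adj k) (6 * j + 5) = (\<lambda>(q, r). 6 * q + r) ` {(j, 3), (j, 4), (cyc_succ k j, 0)}"
  proof (rule G_nbrsI)
    fix q r :: nat assume r: "r < 6"
    have gadget: "gadget_edge 5 r \<or> gadget_edge r 5 \<longleftrightarrow> r = 3 \<or> r = 4" by (auto simp: gadget_edge_def)
    show "q < k \<and> G_adj k (6 * j + 5) (6 * q + r) \<longleftrightarrow> (q, r) \<in> {(j, 3), (j, 4), (cyc_succ k j, 0)}"
      using gadget G_adj_blocks[of 5 r k j q] r assms cyc_succ_less[OF assms] by auto
  qed simp
  then show ?thesis by simp
qed

text \<open>Block coordinates (j, t) of the vertices a_1, f_1 and all b_j, d_j.\<close>
definition G_forcing_blocks :: "nat \<Rightarrow> (nat \<times> nat) set" where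
  "G_forcing_blocks k = {(0, 0), (0, 5)} \<union> {..<k} \<times> {1, 3}"

definition G_forcing_set :: "nat \<Rightarrow> nat set" where
  "G_forcing_set k = (\<lambda>(q, r). 6 * q + r) ` G_forcing_blocks k"

lemma card_G_forcing_set: "card (G_forcing_set k) = 2 * k + 2"
proof -
  have "inj_on (\<lambda>(q, r). 6 * q + r) (UNIV \<times> {..<6::nat})"
    by (auto simp: inj_on_def block_eq_iff)
  then have "inj_on (\<lambda>(q, r). 6 * q + r) (G_forcing_blocks k)"
    by (rule inj_on_subset) (auto simp: G_forcing_blocks_def)
  moreover have "card (G_forcing_blocks k) = 2 + 2 * k"
    unfolding G_forcing_blocks_def by (subst card_Un_disjoint) (auto simp: card_cartesian_product)
  ultimately show ?thesis unfolding G_forcing_set_def by (simp add: card_image)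
qed

lemma G_forcing_blocks_in_closure:
  assumes "(q, r) \<in> G_forcing_blocks k" "q < k"
  shows "6 * q + r \<in> zf_closure (6 * k) (G_adj k) (G_forcing_set k)"
proof (rule zf_closure.init)
  show "6 * q + r \<in> G_forcing_set k" using assms(1) unfolding G_forcing_set_def by force
  show "6 * q + r < 6 * k" using assms by (auto simp: G_forcing_blocks_def)
qed

text \<open>Block 1: b_1 forces e_1 and d_1 forces c_1. Block j + 1: f_j forces a_(j+1), then
b_(j+1) forces e_(j+1), a_(j+1) forces c_(j+1), and d_(j+1) forces f_(j+1).\<close>
lemma G_forcing_set_forces_block:
  assumes "j < k" "t < 6"
  shows "6 * j + t \<in> zf_closure (6 * k) (G_adj k) (G_forcing_set k)"
  using assms
proof (induction j arbitrary: t)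
  case 0
  let ?C = "zf_closure (6 * k) (G_adj k) (G_forcing_set k)"
  have a_b_d_f: "0 \<in> ?C" "1 \<in> ?C" "3 \<in> ?C" "5 \<in> ?C"
    using G_forcing_blocks_in_closure[of 0 _ k] "0.prems"(1) by (simp_all add: G_forcing_blocks_def)
  have e: "4 \<in> ?C"
    by (rule zf_closure_force_nbrs[OF a_b_d_f(2)])
      (use G_nbrs_bc[OF "0.prems"(1), of 1] a_b_d_f in auto)
  have c: "2 \<in> ?C"
    by (rule zf_closure_force_nbrs[OF a_b_d_f(3)])
      (use G_nbrs_de[OF "0.prems"(1), of 3] a_b_d_f in auto)
  show ?case using less_6_cases[OF "0.prems"(2)] a_b_d_f c e by auto
next
  case (Suc j)
  let ?C = "zf_closure (6 * k) (G_adj k) (G_forcing_set k)"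
  have prev: "6 * j + t \<in> ?C" if "t < 6" for t using Suc that by simp
  have succ: "cyc_succ k j = Suc j" and pred: "cyc_pred k (Suc j) = j"
    using Suc.prems unfolding cyc_succ_def cyc_pred_def by simp_all
  have a: "6 * Suc j \<in> ?C"
    by (rule zf_closure_force_nbrs[OF prev[of 5]]) (use G_nbrs_f[of j k] Suc.prems prev succ in auto)
  have b_d: "6 * Suc j + 1 \<in> ?C" "6 * Suc j + 3 \<in> ?C"
    using G_forcing_blocks_in_closure[of "Suc j" 1 k] G_forcing_blocks_in_closure[of "Suc j" 3 k]
      Suc.prems(1) by (simp_all add: G_forcing_blocks_def)
  have e: "6 * Suc j + 4 \<in> ?C"
    by (rule zf_closure_force_nbrs[OF b_d(1)]) (use G_nbrs_bc[OF Suc.prems(1), of 1] a b_d in auto)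
  have c: "6 * Suc j + 2 \<in> ?C"
    by (rule zf_closure_force_nbrs[OF a]) (use G_nbrs_a[OF Suc.prems(1)] b_d prev[of 5] pred in auto)
  have f: "6 * Suc j + 5 \<in> ?C"
    by (rule zf_closure_force_nbrs[OF b_d(2)]) (use G_nbrs_de[OF Suc.prems(1), of 3] b_d c in auto)
  show ?case using less_6_cases[OF Suc.prems(2)] a b_d c e f by auto
qed

lemma G_forcing_set_zero_forcing:
  assumes "k \<ge> 1"
  shows "zero_forcing_set (6 * k) (G_adj k) (G_forcing_set k)"
  unfolding zero_forcing_set_def
proof
  show "G_forcing_set k \<subseteq> {..<6 * k}"
    using assms by (auto simp: G_forcing_set_def G_forcing_blocks_def)
  have "v \<in> zf_closure (6 * k) (G_adj k) (G_forcing_set k)" if "v < 6 * k" for v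
    using G_forcing_set_forces_block[of "v div 6" k "v mod 6"] that by simp
  then show "zf_closure (6 * k) (G_adj k) (G_forcing_set k) = {..<6 * k}"
    using zf_closure_less by blast
qed

definition adjacency_mat :: "nat \<Rightarrow> (nat \<Rightarrow> nat \<Rightarrow> bool) \<Rightarrow> real mat" where
  "adjacency_mat n adj = mat n n (\<lambda>(i, j). if adj i j then 1 else 0)"

lemma adjacency_mat_S_graph:
  assumes "\<And>s t. adj s t \<longleftrightarrow> adj t s"
  shows "adjacency_mat n adj \<in> S_graph n adj"
  unfolding S_graph_def adjacency_mat_def using assms by (auto intro!: eq_matI)

lemma adjacency_mat_mult_vec:
  assumes "i < n"
  shows "(adjacency_mat n adj *\<^sub>v vec n f) $ i = sum f (nbrs n adj i)"
proof -
  have "(adjacency_mat n adj *\<^sub>v vec n f) $ i = (\<Sum>l\<in>{0..<n}. if adj i l then f l else 0)"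
    using assms by (auto simp: adjacency_mat_def mult_mat_vec_def scalar_prod_def intro!: sum.cong)
  also have "\<dots> = sum f {l \<in> {0..<n}. adj i l}" by (rule sum.inter_filter[symmetric]) simp
  finally show ?thesis by (simp add: nbrs_def)
qed

definition block_vec :: "nat \<Rightarrow> (nat \<Rightarrow> nat \<Rightarrow> real) \<Rightarrow> real vec" where
  "block_vec k g = vec (6 * k) (\<lambda>l. g (l div 6) (l mod 6))"

lemma block_vec_in_kernel:
  assumes row_a: "\<And>j. j < k \<Longrightarrow> g j 1 + g j 2 + g (cyc_pred k j) 5 = 0"
    and row_bc: "\<And>j. j < k \<Longrightarrow> g j 0 + g j 3 + g j 4 = 0"
    and row_de: "\<And>j. j < k \<Longrightarrow> g j 1 + g j 2 + g j 5 = 0"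
    and row_f: "\<And>j. j < k \<Longrightarrow> g j 3 + g j 4 + g (cyc_succ k j) 0 = 0"
  shows "block_vec k g \<in> mat_kernel (adjacency_mat (6 * k) (G_adj k))"
proof (rule mat_kernelI)
  show "adjacency_mat (6 * k) (G_adj k) \<in> carrier_mat (6 * k) (6 * k)"
    by (simp add: adjacency_mat_def)
  show "block_vec k g \<in> carrier_vec (6 * k)" by (simp add: block_vec_def)
  show "adjacency_mat (6 * k) (G_adj k) *\<^sub>v block_vec k g = 0\<^sub>v (6 * k)"
  proof (rule eq_vecI)
    fix i assume "i < dim_vec (0\<^sub>v (6 * k) :: real vec)"
    then have i: "i < 6 * k" by simp
    define j t where "j = i div 6" and "t = i mod 6"
    have it: "i = 6 * j + t" "t < 6" unfolding j_def t_def by simp_all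
    have j: "j < k" using i it by linarith
    define f where "f l = g (l div 6) (l mod 6)" for l
    have f_block: "f (6 * q + r) = g q r" "f (6 * q) = g q 0" if "r < 6" for q r
      unfolding f_def using that by simp_all
    note f_blocks = f_block[of 1] f_block[of 2] f_block[of 3] f_block[of 4] f_block[of 5]
    consider "t = 0" | "t = 1 \<or> t = 2" | "t = 3 \<or> t = 4" | "t = 5" using it(2) by linarith
    then have "sum f (nbrs (6 * k) (G_adj k) i) = 0"
    proof cases
      case 1
      then show ?thesis
        using G_nbrs_a[OF j] row_a[OF j] it(1) f_blocks block_eq_iff[of 1 5 j "cyc_pred k j"]
          block_eq_iff[of 2 5 j "cyc_pred k j"] by simp
    next
      case 2
      then show ?thesis
        using G_nbrs_bc[OF j] row_bc[OF j] it(1) f_blocks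
          block_eq_iff0[of 3 j j] block_eq_iff0[of 4 j j] by auto
    next
      case 3
      then show ?thesis using G_nbrs_de[OF j] row_de[OF j] it(1) f_blocks by auto
    next
      case 4
      then show ?thesis
        using G_nbrs_f[OF j] row_f[OF j] it(1) f_blocks block_eq_iff0[of 3 j "cyc_succ k j"]
          block_eq_iff0[of 4 j "cyc_succ k j"] by simp
    qed
    then show "(adjacency_mat (6 * k) (G_adj k) *\<^sub>v block_vec k g) $ i = 0\<^sub>v (6 * k) $ i"
      using adjacency_mat_mult_vec[OF i] i unfolding block_vec_def f_def by simp
  qed (simp add: adjacency_mat_def)
qed

definition twin_diff :: "nat \<Rightarrow> nat \<Rightarrow> nat \<Rightarrow> nat \<Rightarrow> nat \<Rightarrow> real" where
  "twin_diff J s s' q r = (if q = J \<and> r = s then 1 else if q = J \<and> r = s' then -1 else 0)"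

definition all_blocks_diff :: "nat \<Rightarrow> nat \<Rightarrow> nat \<Rightarrow> nat \<Rightarrow> real" where
  "all_blocks_diff s s' q r = (if r = s then 1 else if r = s' then -1 else 0)"

lemma G_adjacency_mat_null_vectors:
  "block_vec k (twin_diff J 1 2) \<in> mat_kernel (adjacency_mat (6 * k) (G_adj k))"
  "block_vec k (twin_diff J 3 4) \<in> mat_kernel (adjacency_mat (6 * k) (G_adj k))"
  "block_vec k (all_blocks_diff 0 4) \<in> mat_kernel (adjacency_mat (6 * k) (G_adj k))"
  "block_vec k (all_blocks_diff 5 2) \<in> mat_kernel (adjacency_mat (6 * k) (G_adj k))"
  by (rule block_vec_in_kernel; simp add: twin_diff_def all_blocks_diff_def)+

lemma block_vec_indicator_on_G_forcing_set:
  assumes k: "k \<ge> 1" and q0r0: "(q0, r0) \<in> G_forcing_blocks k"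
    and g: "\<And>q r. (q, r) \<in> G_forcing_blocks k \<Longrightarrow> g q r = (if (q, r) = (q0, r0) then 1 else 0)"
  shows "\<forall>p\<in>G_forcing_set k. block_vec k g $ p = (if p = 6 * q0 + r0 then 1 else 0)"
proof
  fix p assume "p \<in> G_forcing_set k"
  then obtain q r where qr: "(q, r) \<in> G_forcing_blocks k" and p: "p = 6 * q + r"
    unfolding G_forcing_set_def by force
  have "r < 6" "r0 < 6" "q < k" using qr q0r0 k by (auto simp: G_forcing_blocks_def)
  then show "block_vec k g $ p = (if p = 6 * q0 + r0 then 1 else 0)"
    using g[OF qr] p by (simp add: block_vec_def block_eq_iff)
qed

lemma G_forcing_set_coord_indicators:
  assumes k: "k \<ge> 1" and p: "p \<in> G_forcing_set k"
  shows "\<exists>w\<in>mat_kernel (adjacency_mat (6 * k) (G_adj k)).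
           \<forall>p'\<in>G_forcing_set k. w $ p' = (if p' = p then 1 else 0)"
proof -
  obtain q0 r0 where q0r0: "(q0, r0) \<in> G_forcing_blocks k" and p_eq: "p = 6 * q0 + r0"
    using p unfolding G_forcing_set_def by force
  note indicator = block_vec_indicator_on_G_forcing_set[OF k q0r0, folded p_eq]
  from q0r0 consider "(q0, r0) = (0, 0)" | "(q0, r0) = (0, 5)" | "r0 = 1" | "r0 = 3"
    unfolding G_forcing_blocks_def by blast
  then show ?thesis
  proof cases
    case 1
    have "\<forall>p'\<in>G_forcing_set k. block_vec k (all_blocks_diff 0 4) $ p' = (if p' = p then 1 else 0)"
      by (rule indicator) (use 1 in \<open>auto simp: G_forcing_blocks_def all_blocks_diff_def\<close>)
    then show ?thesis using G_adjacency_mat_null_vectors(3) by blast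
  next
    case 2
    have "\<forall>p'\<in>G_forcing_set k. block_vec k (all_blocks_diff 5 2) $ p' = (if p' = p then 1 else 0)"
      by (rule indicator) (use 2 in \<open>auto simp: G_forcing_blocks_def all_blocks_diff_def\<close>)
    then show ?thesis using G_adjacency_mat_null_vectors(4) by blast
  next
    case 3
    have "\<forall>p'\<in>G_forcing_set k. block_vec k (twin_diff q0 1 2) $ p' = (if p' = p then 1 else 0)"
      by (rule indicator) (use 3 in \<open>auto simp: G_forcing_blocks_def twin_diff_def\<close>)
    then show ?thesis using G_adjacency_mat_null_vectors(1) by blast
  next
    case 4
    have "\<forall>p'\<in>G_forcing_set k. block_vec k (twin_diff q0 3 4) $ p' = (if p' = p then 1 else 0)"
      by (rule indicator) (use 4 in \<open>auto simp: G_forcing_blocks_def twin_diff_def\<close>)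
    then show ?thesis using G_adjacency_mat_null_vectors(2) by blast
  qed
qed

lemma kernel_dim_G_adjacency_mat:
  assumes k: "k \<ge> 1"
  shows "2 * k + 2 \<le> kernel_dim (adjacency_mat (6 * k) (G_adj k))"
proof -
  have "adjacency_mat (6 * k) (G_adj k) \<in> carrier_mat (6 * k) (6 * k)"
    by (simp add: adjacency_mat_def)
  then interpret kernel "6 * k" "6 * k" "adjacency_mat (6 * k) (G_adj k)" by unfold_locales
  have sub: "G_forcing_set k \<subseteq> {..<6 * k}"
    using G_forcing_set_zero_forcing[OF k] by (simp add: zero_forcing_set_def)
  have "card (G_forcing_set k) \<le> dim"
    using finite_subset[OF sub] sub G_forcing_set_coord_indicators[OF k]
    by (rule card_le_dim_coord_indicators) simp_all
  then show ?thesis by (simp add: card_G_forcing_set)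
qed

theorem mainTheorem10:
  fixes k :: nat
  assumes "k \<ge> 3"
  shows "zero_forcing_number (6 * k) (G_adj k) = 6 * k div 3 + 2 \<and>
         max_nullity (6 * k) (G_adj k) = 6 * k div 3 + 2"
proof -
  from assms have k: "k \<ge> 1" \<comment> \<open>all that is needed of k \<ge> 3\<close> by simp
  have "zero_forcing_number (6 * k) (G_adj k) = card (G_forcing_set k) \<and>
      max_nullity (6 * k) (G_adj k) = card (G_forcing_set k)"
  proof (rule zero_forcing_number_eq_max_nullity)
    show "zero_forcing_set (6 * k) (G_adj k) (G_forcing_set k)"
      by (rule G_forcing_set_zero_forcing[OF k])
    show "adjacency_mat (6 * k) (G_adj k) \<in> S_graph (6 * k) (G_adj k)"
      by (rule adjacency_mat_S_graph) (auto simp: G_adj_def)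
    show "card (G_forcing_set k) \<le> kernel_dim (adjacency_mat (6 * k) (G_adj k))"
      using kernel_dim_G_adjacency_mat[OF k] by (simp add: card_G_forcing_set)
  qed
  then show ?thesis by (simp add: card_G_forcing_set)
qed

end
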